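(* Suppose that the constant function $1$ belongs to $\mathcal F^{(1)}_\ell(p)$, that $-\Delta^{-\ell}\mathcal T_p^{\ell}1(x)>0$ for $\mu$-almost all $x\in\mathcal S(p)$, and that $\Delta^{-\ell}(\mathcal T_p^\ell 1)\in L^1(\mu)$. Then for every $x'\in\mathcal S(p)$ the function $$p^\star_{x'}(x)=\frac{K_p^\ell(x,x')}{p(x')}\big(-\Delta^{-\ell}\mathcal T_p^{\ell}1(x)\big)$$ is a probability density on $\mathcal S(p)$ with respect to $\mu$.
   Context: Let $\mu$ be either the counting measure on $\mathcal X=\mathbb Z$ or Lebesgue measure on $\mathcal X=\mathbb R$. Let $X$ be a random variable with density $p$ with respect to $\mu$ and support $\mathcal S(p)=\{x: p(x)>0\}$. Standing assumption: in the counting case $\mathcal S(p)=[a,b]\cap\mathbb Z$ for some $a<b\in\mathbb Z\cup\{\pm\infty\}$; in the Lebesgue case $\mathcal S(p)$ has interior $(a,b)$ and closure $[a,b]$ for some $a<b\in\mathbb R\cup\{\pm\infty\}$; $p$ is not a point mass. Fix $\ell\in\{-1,0,1\}$; $\ell=0$ is used with Lebesgue measure, $\ell=\pm1$ with counting measure. Define $\Delta^0f=f'$ (weak derivative) and, for $\ell=\pm1$, $\Delta^{\ell}f(x)=\frac1\ell(f(x+\ell)-f(x))$; $\mathrm{dom}(\Delta^\ell)$ is the set of absolutely continuous functions if $\ell=0$ and all functions $\mathbb Z\to\mathbb R$ if $\ell=\pm1$; $\mathrm{dom}(p,\Delta^\ell)=\{f: fp\in\mathrm{dom}(\Delta^\ell)\}$.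 The canonical Stein operator is $\mathcal T_p^\ell f=\Delta^\ell(fp)/p$ on $\mathcal S(p)$ and $0$ outside; in particular $\mathcal T_p^\ell 1=\Delta^\ell p/p$. The canonical Stein class $\mathcal F^{(1)}_\ell(p)$ is the set of $f\in\mathrm{dom}(p,\Delta^\ell)$ with $\Delta^\ell(fp)\mathbb I_{\mathcal S(p)}\in L^1(\mu)$ and $\int_{\mathcal S(p)}\Delta^\ell(fp)\,d\mu=0$. Set $a_\ell=\mathbb I[\ell=1]$, $\chi^{\ell}(x,y)=\mathbb I[x\le y-a_\ell]$, and $K_p^{\ell}(x,x')=\mathbb E[\chi^\ell(X,x)\chi^\ell(X,x')]-\mathbb E[\chi^\ell(X,x)]\mathbb E[\chi^\ell(X,x')]$ for $x,x'\in\mathcal S(p)$. *)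

theory Defs
  imports "HOL-Analysis.Analysis"
begin

definition supp :: "('a \<Rightarrow> real) \<Rightarrow> 'a set" where
  "supp p = {x. 0 < p x}"

text \<open>Lebesgue case, Delta^0 = weak derivative: f is (locally) absolutely continuous on the
  interval I with (a.e.) derivative g, i.e. g is integrable on every compact subinterval of I
  and f y - f x is the integral of g over [x,y].\<close>
definition has_weak_deriv_on :: "(real \<Rightarrow> real) \<Rightarrow> (real \<Rightarrow> real) \<Rightarrow> real set \<Rightarrow> bool" where
  "has_weak_deriv_on f g I \<longleftrightarrow>
     (\<forall>x y. x \<in> I \<longrightarrow> y \<in> I \<longrightarrow> x \<le> y \<longrightarrow>
        set_integrable lborel {x..y} g \<and> f y - f x = (LINT t:{x..y}|lborel. g t))"

text \<open>Counting case, l = 1 or l = -1: forward / backward difference.\<close>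
definition delta :: "int \<Rightarrow> (int \<Rightarrow> real) \<Rightarrow> int \<Rightarrow> real" where
  "delta l f x = (f (x + l) - f x) / real_of_int l"

definition chi :: "'a::ordered_ab_group_add \<Rightarrow> 'a \<Rightarrow> 'a \<Rightarrow> real" where
  "chi a x y = (if x \<le> y - a then 1 else 0)"

text \<open>K_p^l(x,x') = Cov(chi(X,x), chi(X,x')) for X with density p w.r.t. the measure M
  (expectations written as integrals against p dM).\<close>
definition covK :: "'a::ordered_ab_group_add measure \<Rightarrow> ('a \<Rightarrow> real) \<Rightarrow> 'a \<Rightarrow> 'a \<Rightarrow> 'a \<Rightarrow> real" where
  "covK M p a x x' =
     (LINT t|M. chi a t x * chi a t x' * p t)
     - (LINT t|M. chi a t x * p t) * (LINT t|M. chi a t x' * p t)"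

definition prob_density_on :: "'a measure \<Rightarrow> 'a set \<Rightarrow> ('a \<Rightarrow> real) \<Rightarrow> bool" where
  "prob_density_on M S f \<longleftrightarrow>
     (AE x in M. x \<in> S \<longrightarrow> 0 \<le> f x) \<and> set_integrable M S f \<and> (LINT x:S|M. f x) = 1"

end

theory Submission
  imports Defs
begin

text \<open>
  Let \<open>F(y) = P(X \<le> y - a)\<close> and \<open>\<rho> = \<Delta>\<^sup>\<ell>p / p\<close>. Since \<open>\<chi>(t,x) \<chi>(t,x') = \<chi>(t, min x x')\<close>, the kernel
  is \<open>K(x,x') = F(min x x') (1 - F(max x x'))\<close>, which is nonnegative. Writing \<open>F\<close> as an integral of
  \<open>p\<close> and applying Fubini turns \<open>\<integral> -\<Delta>\<^sup>-\<^sup>\<ell>\<rho>(x) K(x,x') d\<mu>(x)\<close> into an integral of \<open>p(t)\<close> against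
  partial integrals of \<open>-\<Delta>\<^sup>-\<^sup>\<ell>\<rho>\<close>; these telescope (summation by parts, resp. the fundamental theorem
  of calculus for weak derivatives) to \<open>\<rho>(t)\<close> minus a constant. The constant drops out because
  \<open>\<integral> p = 1\<close> and \<open>\<integral> p \<rho> = \<integral> \<Delta>\<^sup>\<ell>p = 0\<close>. What remains is the integral of \<open>\<Delta>\<^sup>\<ell>p\<close> over
  \<open>{t \<le> x' - a}\<close>, which telescopes to \<open>p(x')\<close> since \<open>p\<close> vanishes at the lower end of its support.
\<close>

section \<open>The covariance kernel\<close>

lemma chi_eq_indicator:
  "chi a t y = indicator {..y - a} t"
  by (simp add: chi_def indicator_def)

lemma chi_mult_chi:
  fixes a :: "'a::linordered_ab_group_add"
  shows "chi a t x * chi a t c = chi a t (min x c)"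
proof (cases "x \<le> c")
  case True
  then have "t \<le> x - a \<Longrightarrow> t \<le> c - a"
    by (meson diff_right_mono order_trans)
  with True show ?thesis by (simp add: chi_def min_def)
next
  case False
  then have "t \<le> c - a \<Longrightarrow> t \<le> x - a"
    by (meson diff_right_mono order_trans nle_le)
  with False show ?thesis by (simp add: chi_def min_def)
qed

definition chi_mean :: "'a::ordered_ab_group_add measure \<Rightarrow> ('a \<Rightarrow> real) \<Rightarrow> 'a \<Rightarrow> 'a \<Rightarrow> real"
  where "chi_mean M p a y = (\<integral>t. chi a t y * p t \<partial>M)"

lemma covK_eq_chi_mean:
  fixes M :: "'a::linordered_ab_group_add measure"
  shows "covK M p a x c =
     (if x \<le> c then chi_mean M p a x * (1 - chi_mean M p a c)
      else chi_mean M p a c * (1 - chi_mean M p a x))"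
  unfolding covK_def chi_mult_chi by (simp add: chi_mean_def min_def algebra_simps)

lemma integrable_chi_mult:
  fixes f :: "'a::ordered_ab_group_add \<Rightarrow> real"
  assumes "integrable M f" "{..y - a} \<in> sets M"
  shows "integrable M (\<lambda>t. chi a t y * f t)"
  using integrable_mult_indicator[OF assms(2,1)] by (simp add: chi_eq_indicator)

lemma chi_mean_bounds:
  assumes p: "integrable M p" "\<And>x. 0 \<le> p x" "(\<integral>x. p x \<partial>M) = 1" and "{..y - a} \<in> sets M"
  shows "0 \<le> chi_mean M p a y" "chi_mean M p a y \<le> 1"
proof -
  show "0 \<le> chi_mean M p a y"
    unfolding chi_mean_def using p by (auto intro!: integral_nonneg_AE simp: chi_def)
  have "chi_mean M p a y \<le> (\<integral>x. p x \<partial>M)"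
    unfolding chi_mean_def using assms integrable_chi_mult[OF p(1)]
    by (intro integral_mono) (auto simp: chi_def)
  with p show "chi_mean M p a y \<le> 1" by simp
qed

lemma covK_nonneg:
  fixes M :: "'a::linordered_ab_group_add measure"
  assumes "integrable M p" "\<And>x. 0 \<le> p x" "(\<integral>x. p x \<partial>M) = 1" and "\<And>y. {..y} \<in> sets M"
  shows "0 \<le> covK M p a x c"
  using chi_mean_bounds[OF assms(1-3) assms(4)] by (simp add: covK_eq_chi_mean)

lemma covK_eq_region_integrals:
  fixes M :: "'a::linordered_ab_group_add measure"
  assumes p: "integrable M p" "(\<integral>t. p t \<partial>M) = 1" and "{..x - a} \<in> sets M"
  shows "covK M p a x c =
      (1 - chi_mean M p a c) * (\<integral>t. (if x \<le> c \<and> t \<le> x - a then p t else 0) \<partial>M)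
    + chi_mean M p a c * (\<integral>t. (if c < x \<and> \<not> t \<le> x - a then p t else 0) \<partial>M)"
proof -
  have complement: "1 - chi_mean M p a x = (\<integral>t. (if \<not> t \<le> x - a then p t else 0) \<partial>M)"
  proof -
    have "1 - chi_mean M p a x = (\<integral>t. p t - chi a t x * p t \<partial>M)"
      using assms integrable_chi_mult[OF p(1)] by (simp add: chi_mean_def)
    also have "\<dots> = (\<integral>t. (if \<not> t \<le> x - a then p t else 0) \<partial>M)"
      by (rule Bochner_Integration.integral_cong) (auto simp: chi_def)
    finally show ?thesis .
  qed
  show ?thesis
  proof (cases "x \<le> c")
    case True
    then have "\<not> c < x"
      by simp
    with True show ?thesis
      by (simp add: covK_eq_chi_mean chi_mean_def chi_def if_distrib[of "\<lambda>u. u * p _"] cong: if_cong)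
  next
    case False
    then have "covK M p a x c = chi_mean M p a c * (1 - chi_mean M p a x)"
      by (simp add: covK_eq_chi_mean)
    also have "\<dots> = chi_mean M p a c * (\<integral>t. (if \<not> t \<le> x - a then p t else 0) \<partial>M)"
      by (simp only: complement)
    moreover have "c < x"
      using False by simp
    ultimately show ?thesis
      using False by simp
  qed
qed

lemma integral_weighted_relation_swap:
  fixes M :: "'a measure" and W p :: "'a \<Rightarrow> real"
  assumes "sigma_finite_measure M" and W: "integrable M W" and p: "integrable M p"
    and R: "Measurable.pred (M \<Otimes>\<^sub>M M) (\<lambda>z. R (fst z) (snd z))"
  shows "integrable M (\<lambda>x. W x * (\<integral>t. (if R x t then p t else 0) \<partial>M))"
    and "integrable M (\<lambda>t. p t * (\<integral>x. (if R x t then W x else 0) \<partial>M))"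
    and "(\<integral>x. W x * (\<integral>t. (if R x t then p t else 0) \<partial>M) \<partial>M)
       = (\<integral>t. p t * (\<integral>x. (if R x t then W x else 0) \<partial>M) \<partial>M)"
proof -
  interpret pair_sigma_finite M M
    using assms(1) by (simp add: pair_sigma_finite_def)
  have [measurable]: "W \<in> borel_measurable M" "p \<in> borel_measurable M"
    using W p by auto
  define F where "F = (\<lambda>(x, t). if R x t then W x * p t else 0)"
  have "integrable (M \<Otimes>\<^sub>M M) (\<lambda>z. \<bar>W (fst z)\<bar> * \<bar>p (snd z)\<bar>)"
    by (rule Fubini_integrable) (use W p in \<open>auto simp: abs_mult\<close>)
  then have F: "integrable (M \<Otimes>\<^sub>M M) F"
    by (rule Bochner_Integration.integrable_bound)
      (use R in \<open>auto simp: F_def case_prod_beta abs_mult\<close>)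
  have "(\<lambda>t. F (x, t)) = (\<lambda>t. W x * (if R x t then p t else 0))" for x
    by (simp add: F_def fun_eq_iff)
  then have F_fst: "(\<integral>t. F (x, t) \<partial>M) = W x * (\<integral>t. (if R x t then p t else 0) \<partial>M)" for x
    by simp
  have "(\<lambda>x. F (x, t)) = (\<lambda>x. p t * (if R x t then W x else 0))" for t
    by (simp add: F_def fun_eq_iff)
  then have F_snd: "(\<integral>x. F (x, t) \<partial>M) = p t * (\<integral>x. (if R x t then W x else 0) \<partial>M)" for t
    by simp
  show "integrable M (\<lambda>x. W x * (\<integral>t. (if R x t then p t else 0) \<partial>M))"
    using integrable_fst'[OF F] by (simp add: F_fst)
  show "integrable M (\<lambda>t. p t * (\<integral>x. (if R x t then W x else 0) \<partial>M))"
    using integrable_fst'[OF integrable_product_swap[OF F]] by (simp add: F_snd)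
  show "(\<integral>x. W x * (\<integral>t. (if R x t then p t else 0) \<partial>M) \<partial>M)
       = (\<integral>t. p t * (\<integral>x. (if R x t then W x else 0) \<partial>M) \<partial>M)"
    using Fubini_integral[of "\<lambda>x t. F (x, t)"] F by (simp add: F_fst F_snd)
qed

lemma integral_weight_mult_covK_swap:
  fixes M :: "'a::linordered_ab_group_add measure" and p W :: "'a \<Rightarrow> real"
  assumes M: "sigma_finite_measure M" "\<And>y. {..y} \<in> sets M"
      "Measurable.pred (M \<Otimes>\<^sub>M M) (\<lambda>z. snd z \<le> fst z - a)"
    and p: "integrable M p" "(\<integral>t. p t \<partial>M) = 1"
    and W: "integrable M W"
  shows "integrable M (\<lambda>x. W x * covK M p a x c)"
    and "(\<integral>x. W x * covK M p a x c \<partial>M) =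
        (1 - chi_mean M p a c) * (\<integral>t. p t * (\<integral>x. (if x \<le> c \<and> t \<le> x - a then W x else 0) \<partial>M) \<partial>M)
      + chi_mean M p a c * (\<integral>t. p t * (\<integral>x. (if c < x \<and> \<not> t \<le> x - a then W x else 0) \<partial>M) \<partial>M)"
proof -
  have c_le: "Measurable.pred (M \<Otimes>\<^sub>M M) (\<lambda>z. fst z \<le> c)"
    using pred_sets2[OF M(2) measurable_fst] by simp
  have R: "Measurable.pred (M \<Otimes>\<^sub>M M) (\<lambda>z. fst z \<le> c \<and> snd z \<le> fst z - a)"
    "Measurable.pred (M \<Otimes>\<^sub>M M) (\<lambda>z. c < fst z \<and> \<not> snd z \<le> fst z - a)"
    unfolding not_le[symmetric] by (intro pred_intros_logic c_le M(3))+
  note swap1 = integral_weighted_relation_swap[OF M(1) W p(1) R(1)]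
  note swap2 = integral_weighted_relation_swap[OF M(1) W p(1) R(2)]
  let ?G = "chi_mean M p a c"
    and ?I1 = "\<lambda>x. \<integral>t. (if x \<le> c \<and> t \<le> x - a then p t else 0) \<partial>M"
    and ?I2 = "\<lambda>x. \<integral>t. (if c < x \<and> \<not> t \<le> x - a then p t else 0) \<partial>M"
  have weight_split: "W x * covK M p a x c = (1 - ?G) * (W x * ?I1 x) + ?G * (W x * ?I2 x)" for x
    unfolding covK_eq_region_integrals[OF p M(2)] by (simp only: distrib_left mult.left_commute)
  have int1: "integrable M (\<lambda>x. (1 - ?G) * (W x * ?I1 x))"
    using swap1(1) by (rule integrable_mult_right)
  have int2: "integrable M (\<lambda>x. ?G * (W x * ?I2 x))"
    using swap2(1) by (rule integrable_mult_right)
  show "integrable M (\<lambda>x. W x * covK M p a x c)"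
    unfolding weight_split by (rule Bochner_Integration.integrable_add[OF int1 int2])
  show "(\<integral>x. W x * covK M p a x c \<partial>M) =
        (1 - ?G) * (\<integral>t. p t * (\<integral>x. (if x \<le> c \<and> t \<le> x - a then W x else 0) \<partial>M) \<partial>M)
      + ?G * (\<integral>t. p t * (\<integral>x. (if c < x \<and> \<not> t \<le> x - a then W x else 0) \<partial>M) \<partial>M)"
    unfolding weight_split Bochner_Integration.integral_add[OF int1 int2] integral_mult_right_zero swap1(3) swap2(3) ..
qed

lemma mult_integral_if_region:
  fixes W :: "'a \<Rightarrow> real"
  assumes "q \<noteq> 0 \<Longrightarrow> P \<Longrightarrow> (\<integral>x. (if R x then W x else 0) \<partial>M) = v" and "\<And>x. R x \<Longrightarrow> P"
  shows "q * (\<integral>x. (if R x then W x else 0) \<partial>M) = (if P then q * v else 0)"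
proof (cases P)
  case True
  with assms(1) show ?thesis
    by (cases "q = 0") simp_all
next
  case False
  with assms(2) have "(\<lambda>x. if R x then W x else 0) = (\<lambda>x. 0)"
    by (auto simp: fun_eq_iff)
  with False show ?thesis
    by simp
qed

lemma integral_weight_mult_covK:
  fixes M :: "'a::linordered_ab_group_add measure" and p W \<rho> :: "'a \<Rightarrow> real"
  assumes M: "sigma_finite_measure M" "\<And>y. {..y} \<in> sets M"
      "Measurable.pred (M \<Otimes>\<^sub>M M) (\<lambda>z. snd z \<le> fst z - a)"
    and p: "integrable M p" "(\<integral>t. p t \<partial>M) = 1"
    and W: "integrable M W"
    and p\<rho>: "integrable M (\<lambda>t. p t * \<rho> t)" "(\<integral>t. p t * \<rho> t \<partial>M) = 0"
    and below: "\<And>t. p t \<noteq> 0 \<Longrightarrow> t \<le> c - a \<Longrightarrow>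
      (\<integral>x. (if x \<le> c \<and> t \<le> x - a then W x else 0) \<partial>M) = \<rho> t - r"
    and above: "\<And>t. p t \<noteq> 0 \<Longrightarrow> \<not> t \<le> c - a \<Longrightarrow>
      (\<integral>x. (if c < x \<and> \<not> t \<le> x - a then W x else 0) \<partial>M) = r - \<rho> t"
  shows "integrable M (\<lambda>x. W x * covK M p a x c)"
    and "(\<integral>x. W x * covK M p a x c \<partial>M) = (\<integral>t. chi a t c * (p t * \<rho> t) \<partial>M)"
proof -
  let ?G = "chi_mean M p a c" and ?A = "\<integral>t. chi a t c * (p t * \<rho> t) \<partial>M"
  have inner_below: "p t * (\<integral>x. (if x \<le> c \<and> t \<le> x - a then W x else 0) \<partial>M)
      = chi a t c * (p t * \<rho> t - r * p t)" for t
  proof -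
    have "t \<le> c - a" if "x \<le> c \<and> t \<le> x - a" for x
      using that order_trans[of t "x - a" "c - a"] by simp
    from mult_integral_if_region[OF below[of t] this]
    show ?thesis by (simp add: chi_def right_diff_distrib mult.commute)
  qed
  have inner_above: "p t * (\<integral>x. (if c < x \<and> \<not> t \<le> x - a then W x else 0) \<partial>M)
      = (1 - chi a t c) * (r * p t - p t * \<rho> t)" for t
  proof -
    have "\<not> t \<le> c - a" if "c < x \<and> \<not> t \<le> x - a" for x
      using that order_trans[of t "c - a" "x - a"] by (auto simp: less_imp_le)
    from mult_integral_if_region[OF above[of t] this]
    show ?thesis by (simp add: chi_def right_diff_distrib mult.commute)
  qed
  have chi_int: "integrable M (\<lambda>t. chi a t c * f t)" if "integrable M f" for f
    using that M(2) by (rule integrable_chi_mult)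
  have integral_below: "(\<integral>t. chi a t c * (p t * \<rho> t - r * p t) \<partial>M) = ?A - r * ?G"
    using chi_int[OF p(1)] chi_int[OF p\<rho>(1)]
    by (simp add: right_diff_distrib mult.left_commute[of _ r] chi_mean_def)
  have integral_above: "(\<integral>t. (1 - chi a t c) * (r * p t - p t * \<rho> t) \<partial>M) = r * (1 - ?G) + ?A"
    using p p\<rho> chi_int[OF p(1)] chi_int[OF p\<rho>(1)]
    by (simp add: left_diff_distrib right_diff_distrib mult.left_commute[of _ r] chi_mean_def)
  note swap = integral_weight_mult_covK_swap[OF M p W, of c]
  show "integrable M (\<lambda>x. W x * covK M p a x c)"
    by (fact swap(1))
  have "(\<integral>x. W x * covK M p a x c \<partial>M)
      = (1 - ?G) * (\<integral>t. chi a t c * (p t * \<rho> t - r * p t) \<partial>M)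
      + ?G * (\<integral>t. (1 - chi a t c) * (r * p t - p t * \<rho> t) \<partial>M)"
    by (simp only: swap(2) inner_below inner_above)
  also have "\<dots> = ?A"
    by (simp only: integral_below integral_above) (simp add: algebra_simps)
  finally show "(\<integral>x. W x * covK M p a x c \<partial>M) = ?A" .
qed

lemma prob_density_on_scaled_weight:
  fixes w K :: "'a \<Rightarrow> real"
  assumes "integrable M (\<lambda>x. indicator S x * w x * K x)"
    and "(\<integral>x. indicator S x * w x * K x \<partial>M) = q" and "0 < q"
    and "\<And>x. 0 \<le> K x" and "AE x in M. x \<in> S \<longrightarrow> 0 < w x"
  shows "prob_density_on M S (\<lambda>x. K x / q * w x)"
proof -
  have eq: "(\<lambda>x. indicator S x *\<^sub>R (K x / q * w x)) = (\<lambda>x. indicator S x * w x * K x / q)"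
    by (simp add: fun_eq_iff)
  have "AE x in M. x \<in> S \<longrightarrow> 0 \<le> K x / q * w x"
    using assms(5) by eventually_elim (use assms(3,4) in auto)
  with assms(1-3) show ?thesis
    unfolding prob_density_on_def set_integrable_def set_lebesgue_integral_def eq by simp
qed

lemma mult_supp_ratio:
  assumes "\<And>x. 0 \<le> p x"
  shows "p t * (if t \<in> supp p then f t / p t else 0) = indicator (supp p) t * f t"
  using assms[of t] by (auto simp: supp_def indicator_def)

lemma eq_0_if_not_in_supp:
  assumes "\<And>x. 0 \<le> p x" and "t \<notin> supp p"
  shows "p t = 0"
  using assms by (metis antisym not_less mem_Collect_eq supp_def)

definition order_convex :: "'a::order set \<Rightarrow> bool"
  where "order_convex S \<longleftrightarrow> (\<forall>u\<in>S. \<forall>v\<in>S. {u..v} \<subseteq> S)"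

lemma order_convexD: "order_convex S \<Longrightarrow> u \<in> S \<Longrightarrow> v \<in> S \<Longrightarrow> u \<le> x \<Longrightarrow> x \<le> v \<Longrightarrow> x \<in> S"
  unfolding order_convex_def by (meson atLeastAtMost_iff subsetD)

section \<open>Counting measure on the integers\<close>

abbreviation count_int :: "int measure" where
  "count_int \<equiv> count_space UNIV"

lemma integrable_count_space_if:
  "integrable (count_space A) f \<Longrightarrow> integrable (count_space A) (\<lambda>x. if P x then f x else (0::real))"
  by (erule Bochner_Integration.integrable_bound) auto

lemma sum_atLeastAtMost_int_telescope:
  fixes f :: "int \<Rightarrow> real"
  assumes "m \<le> n + 1"
  shows "(\<Sum>x\<in>{m..n}. f x - f (x + 1)) = f m - f (n + 1)"
proof -
  have "m - 1 \<le> n" using assms by simp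
  then show ?thesis
  proof (induction n rule: int_ge_induct)
    case (step i)
    have "{m..i + 1} = insert (i + 1) {m..i}"
      using step by auto
    with step show ?case by simp
  qed simp
qed

lemma integral_count_space_finite_if:
  fixes f :: "int \<Rightarrow> real"
  assumes "finite A"
  shows "(\<integral>x. (if x \<in> A then f x else 0) \<partial>count_int) = (\<Sum>x\<in>A. f x)"
proof -
  have "(\<integral>x. (if x \<in> A then f x else 0) \<partial>count_int) = (\<integral>x. f x * indicator A x \<partial>count_int)"
    by (rule Bochner_Integration.integral_cong) (auto simp: indicator_def)
  also have "\<dots> = (\<Sum>x\<in>A. f x)"
    using assms by (subst integral_indicator_finite_real) auto
  finally show ?thesis .
qed

lemma integral_count_space_telescope:
  fixes f :: "int \<Rightarrow> real"
  assumes "m \<le> n + 1"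
  shows "(\<integral>x. (if m \<le> x \<and> x \<le> n then f x - f (x + 1) else 0) \<partial>count_int) = f m - f (n + 1)"
  using integral_count_space_finite_if[of "{m..n}" "\<lambda>x. f x - f (x + 1)"]
    sum_atLeastAtMost_int_telescope[OF assms] by simp

lemma integral_count_space_shift:
  fixes f :: "int \<Rightarrow> real"
  shows "(\<integral>t. f (t + k) \<partial>count_int) = (\<integral>t. f t \<partial>count_int)"
  by (rule integral_bij_count_space) (rule bij_betwI[where g="\<lambda>t. t - k"], auto)

lemma integral_count_space_reflect:
  fixes f :: "int \<Rightarrow> real"
  shows "(\<integral>t. f (- t) \<partial>count_int) = (\<integral>t. f t \<partial>count_int)"
  by (rule integral_bij_count_space) (rule bij_betwI[where g=uminus], auto)

lemma integral_count_space_backward_diff_atMost: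
  fixes p :: "int \<Rightarrow> real"
  assumes p: "integrable count_int p"
  shows "(\<integral>t. (if t \<le> c then p t - p (t - 1) else 0) \<partial>count_int) = p c"
proof -
  have p_shift: "integrable count_int (\<lambda>t. p (t - 1))"
    using integrable_bij_count_space[of "\<lambda>t. t - 1" UNIV UNIV p] p
    by (simp add: bij_betwI[where g="\<lambda>t. t + 1"])
  let ?P = "\<lambda>d. \<integral>t. (if t \<le> c - d then p t else 0) \<partial>count_int"
  have "(\<integral>t. (if t \<le> c then p (t - 1) else 0) \<partial>count_int)
      = (\<integral>t. (\<lambda>s. if s \<le> c - 1 then p s else 0) (t + - 1) \<partial>count_int)"
    by (rule Bochner_Integration.integral_cong) auto
  also have "\<dots> = ?P 1"
    by (rule integral_count_space_shift)
  finally have shifted: "(\<integral>t. (if t \<le> c then p (t - 1) else 0) \<partial>count_int) = ?P 1" .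
  have "?P 0 = (\<integral>t. (if t \<in> {c} then p t else 0) + (if t \<le> c - 1 then p t else 0) \<partial>count_int)"
    by (rule Bochner_Integration.integral_cong) auto
  also have "\<dots> = p c + ?P 1"
    using integrable_count_space_if[OF p] integral_count_space_finite_if[of "{c}" p] by simp
  finally have split: "?P 0 = p c + ?P 1" .
  have "(\<integral>t. (if t \<le> c then p t - p (t - 1) else 0) \<partial>count_int)
      = (\<integral>t. (if t \<le> c then p t else 0) - (if t \<le> c then p (t - 1) else 0) \<partial>count_int)"
    by (rule Bochner_Integration.integral_cong) auto
  also have "\<dots> = ?P 0 - ?P 1"
    using integrable_count_space_if[OF p] integrable_count_space_if[OF p_shift] shifted by simp
  finally show ?thesis
    using split by simp
qed

lemma integral_count_space_forward_diff_atLeast: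
  fixes p :: "int \<Rightarrow> real"
  assumes p: "integrable count_int p"
  shows "(\<integral>t. (if c \<le> t then p (t + 1) - p t else 0) \<partial>count_int) = - p c"
proof -
  have q: "integrable count_int (\<lambda>s. p (- s))"
    using integrable_bij_count_space[of uminus UNIV UNIV p] p
    by (simp add: bij_betwI[where g=uminus])
  have "(\<integral>t. (if c \<le> t then p (t + 1) - p t else 0) \<partial>count_int)
      = (\<integral>s. (if c \<le> - s then p (- s + 1) - p (- s) else 0) \<partial>count_int)"
    using integral_count_space_reflect[of "\<lambda>t. if c \<le> t then p (t + 1) - p t else 0"] by simp
  also have "\<dots> = - (\<integral>s. (if s \<le> - c then p (- s) - p (- (s - 1)) else 0) \<partial>count_int)"
    by (subst integral_minus[symmetric], rule Bochner_Integration.integral_cong) auto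
  also have "\<dots> = - p c"
    using integral_count_space_backward_diff_atMost[OF q, of "- c"] by simp
  finally show ?thesis .
qed

lemma integral_count_space_telescope_on:
  fixes f g :: "int \<Rightarrow> real"
  assumes "\<And>x. P x \<longleftrightarrow> m \<le> x \<and> x \<le> n" and "m \<le> n + 1"
    and "\<And>x. m \<le> x \<Longrightarrow> x \<le> n \<Longrightarrow> x \<in> S" and "\<And>x. g x = f x - f (x + 1)"
  shows "(\<integral>x. (if P x then indicator S x * g x else 0) \<partial>count_int) = f m - f (n + 1)"
proof -
  have "(\<integral>x. (if P x then indicator S x * g x else 0) \<partial>count_int)
      = (\<integral>x. (if m \<le> x \<and> x \<le> n then f x - f (x + 1) else 0) \<partial>count_int)"
    by (rule Bochner_Integration.integral_cong) (use assms in \<open>auto simp: indicator_def\<close>)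
  also have "\<dots> = f m - f (n + 1)"
    by (rule integral_count_space_telescope) (fact assms(2))
  finally show ?thesis .
qed

lemma order_convex_int_ereal_interval:
  "order_convex {x::int. a \<le> ereal (of_int x) \<and> ereal (of_int x) \<le> b}"
  unfolding order_convex_def
proof (intro ballI subsetI)
  fix u v x
  assume "u \<in> {x::int. a \<le> ereal (of_int x) \<and> ereal (of_int x) \<le> b}"
    and "v \<in> {x::int. a \<le> ereal (of_int x) \<and> ereal (of_int x) \<le> b}" and "x \<in> {u..v}"
  then have "a \<le> ereal (of_int u)" "ereal (of_int u) \<le> ereal (of_int x)"
    and "ereal (of_int x) \<le> ereal (of_int v)" "ereal (of_int v) \<le> b"
    by simp_all
  then show "x \<in> {x::int. a \<le> ereal (of_int x) \<and> ereal (of_int x) \<le> b}"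
    by (blast intro: order_trans)
qed

text \<open>
  If the support starts at a finite point \<open>a\<close>, the indicator in the integrand removes the term
  \<open>p a\<close> at \<open>t = a - 1\<close>; so the identity is reached from the upper tail, using \<open>\<integral> D = 0\<close>.
\<close>

lemma integral_chi_forward_diff_supp:
  fixes p :: "int \<Rightarrow> real"
  defines "D \<equiv> \<lambda>t. indicator (supp p) t * delta 1 p t"
  assumes p0: "\<And>x. 0 \<le> p x" and p: "integrable count_int p" and S: "order_convex (supp p)"
    and D: "integrable count_int D" "(\<integral>t. D t \<partial>count_int) = 0"
    and c: "c \<in> supp p"
  shows "(\<integral>t. chi 1 t c * D t \<partial>count_int) = p c"
proof -
  have "(\<integral>t. (if c \<le> t then D t else 0) \<partial>count_int)
      = (\<integral>t. (if c \<le> t then p (t + 1) - p t else 0) \<partial>count_int)"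
  proof (rule Bochner_Integration.integral_cong)
    fix t
    have "p (t + 1) = 0 \<and> p t = 0" if "c \<le> t" "t \<notin> supp p"
      using that order_convexD[OF S c, of "t + 1" t] eq_0_if_not_in_supp[of p, OF p0] by auto
    then show "(if c \<le> t then D t else 0) = (if c \<le> t then p (t + 1) - p t else 0)"
      by (auto simp: D_def delta_def indicator_def)
  qed simp
  also have "\<dots> = - p c"
    by (rule integral_count_space_forward_diff_atLeast[OF p])
  finally have upper: "(\<integral>t. (if c \<le> t then D t else 0) \<partial>count_int) = - p c" .
  have "(\<integral>t. chi 1 t c * D t \<partial>count_int) = (\<integral>t. D t - (if c \<le> t then D t else 0) \<partial>count_int)"
    by (rule Bochner_Integration.integral_cong) (auto simp: chi_def)
  also have "\<dots> = p c"
    using D integrable_count_space_if[OF D(1)] upper by simp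
  finally show ?thesis .
qed

lemma integral_chi_backward_diff_supp:
  fixes p :: "int \<Rightarrow> real"
  assumes p0: "\<And>x. 0 \<le> p x" and p: "integrable count_int p" and S: "order_convex (supp p)"
    and c: "c \<in> supp p"
  shows "(\<integral>t. chi 0 t c * (indicator (supp p) t * delta (-1) p t) \<partial>count_int) = p c"
proof -
  have "(\<integral>t. chi 0 t c * (indicator (supp p) t * delta (-1) p t) \<partial>count_int)
      = (\<integral>t. (if t \<le> c then p t - p (t - 1) else 0) \<partial>count_int)"
  proof (rule Bochner_Integration.integral_cong)
    fix t
    have "p t = 0 \<and> p (t - 1) = 0" if "t \<le> c" "t \<notin> supp p"
      using that order_convexD[OF S _ c, of "t - 1" t] eq_0_if_not_in_supp[of p, OF p0] by auto
    then show "chi 0 t c * (indicator (supp p) t * delta (-1) p t) = (if t \<le> c then p t - p (t - 1) else 0)"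
      by (auto simp: chi_def delta_def indicator_def)
  qed simp
  also have "\<dots> = p c"
    by (rule integral_count_space_backward_diff_atMost[OF p])
  finally show ?thesis .
qed

lemma integral_weight_covK_count_space_forward:
  fixes p :: "int \<Rightarrow> real"
  defines "\<rho> \<equiv> \<lambda>y. if y \<in> supp p then delta 1 p y / p y else 0"
  assumes p0: "\<And>x. 0 \<le> p x" and p: "integrable count_int p" "(\<integral>x. p x \<partial>count_int) = 1"
    and S: "order_convex (supp p)"
    and D: "set_integrable count_int (supp p) (delta 1 p)" "(LINT x:supp p|count_int. delta 1 p x) = 0"
    and W: "integrable count_int (delta (-1) \<rho>)"
    and c: "c \<in> supp p"
  shows "integrable count_int (\<lambda>x. indicator (supp p) x * - delta (-1) \<rho> x * covK count_int p 1 x c)"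
    and "(\<integral>x. indicator (supp p) x * - delta (-1) \<rho> x * covK count_int p 1 x c \<partial>count_int) = p c"
proof -
  let ?S = "supp p" and ?D = "\<lambda>t. indicator (supp p) t * delta 1 p t"
  have p\<rho>: "p t * \<rho> t = ?D t" for t
    unfolding \<rho>_def by (rule mult_supp_ratio[OF p0])
  have D_int: "integrable count_int ?D" and D_zero: "(\<integral>t. ?D t \<partial>count_int) = 0"
    using D by (simp_all add: set_integrable_def set_lebesgue_integral_def)
  have pS: "p t \<noteq> 0 \<Longrightarrow> t \<in> ?S" for t
    using eq_0_if_not_in_supp[of p, OF p0] by blast
  have W_int: "integrable count_int (\<lambda>x. indicator ?S x * - delta (-1) \<rho> x)"
    using integrable_mult_indicator[OF _ integrable_minus[OF W], of ?S] by simp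
  have below: "(\<integral>x. (if x \<le> c \<and> t \<le> x - 1 then indicator ?S x * - delta (-1) \<rho> x else 0) \<partial>count_int)
      = \<rho> t - \<rho> c" if "p t \<noteq> 0" "t \<le> c - 1" for t
  proof -
    have "(\<integral>x. (if x \<le> c \<and> t \<le> x - 1 then indicator ?S x * - delta (-1) \<rho> x else 0) \<partial>count_int)
      = (\<lambda>y. \<rho> (y - 1)) (t + 1) - (\<lambda>y. \<rho> (y - 1)) (c + 1)"
      by (rule integral_count_space_telescope_on)
        (use that in \<open>auto simp: delta_def intro: order_convexD[OF S pS c]\<close>)
    then show ?thesis by simp
  qed
  have above: "(\<integral>x. (if c < x \<and> \<not> t \<le> x - 1 then indicator ?S x * - delta (-1) \<rho> x else 0) \<partial>count_int)
      = \<rho> c - \<rho> t" if "p t \<noteq> 0" "\<not> t \<le> c - 1" for t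
  proof -
    have "(\<integral>x. (if c < x \<and> \<not> t \<le> x - 1 then indicator ?S x * - delta (-1) \<rho> x else 0) \<partial>count_int)
      = (\<lambda>y. \<rho> (y - 1)) (c + 1) - (\<lambda>y. \<rho> (y - 1)) (t + 1)"
      by (rule integral_count_space_telescope_on)
        (use that in \<open>auto simp: delta_def intro: order_convexD[OF S c pS]\<close>)
    then show ?thesis by simp
  qed
  note weighted = integral_weight_mult_covK[where a=1 and r="\<rho> c",
      OF sigma_finite_measure_count_space _ _ p W_int _ _ below above]
  show "integrable count_int (\<lambda>x. indicator ?S x * - delta (-1) \<rho> x * covK count_int p 1 x c)"
    using weighted(1) D_int D_zero by (simp add: pair_measure_countable p\<rho>)
  show "(\<integral>x. indicator ?S x * - delta (-1) \<rho> x * covK count_int p 1 x c \<partial>count_int) = p c"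
    using weighted(2) D_int D_zero integral_chi_forward_diff_supp[OF p0 p(1) S D_int D_zero c]
    by (simp add: pair_measure_countable p\<rho>)
qed

lemma integral_weight_covK_count_space_backward:
  fixes p :: "int \<Rightarrow> real"
  defines "\<rho> \<equiv> \<lambda>y. if y \<in> supp p then delta (-1) p y / p y else 0"
  assumes p0: "\<And>x. 0 \<le> p x" and p: "integrable count_int p" "(\<integral>x. p x \<partial>count_int) = 1"
    and S: "order_convex (supp p)"
    and D: "set_integrable count_int (supp p) (delta (-1) p)" "(LINT x:supp p|count_int. delta (-1) p x) = 0"
    and W: "integrable count_int (delta 1 \<rho>)"
    and c: "c \<in> supp p"
  shows "integrable count_int (\<lambda>x. indicator (supp p) x * - delta 1 \<rho> x * covK count_int p 0 x c)"
    and "(\<integral>x. indicator (supp p) x * - delta 1 \<rho> x * covK count_int p 0 x c \<partial>count_int) = p c"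
proof -
  let ?S = "supp p" and ?D = "\<lambda>t. indicator (supp p) t * delta (-1) p t"
  have p\<rho>: "p t * \<rho> t = ?D t" for t
    unfolding \<rho>_def by (rule mult_supp_ratio[OF p0])
  have D_int: "integrable count_int ?D" and D_zero: "(\<integral>t. ?D t \<partial>count_int) = 0"
    using D by (simp_all add: set_integrable_def set_lebesgue_integral_def)
  have pS: "p t \<noteq> 0 \<Longrightarrow> t \<in> ?S" for t
    using eq_0_if_not_in_supp[of p, OF p0] by blast
  have W_int: "integrable count_int (\<lambda>x. indicator ?S x * - delta 1 \<rho> x)"
    using integrable_mult_indicator[OF _ integrable_minus[OF W], of ?S] by simp
  have below: "(\<integral>x. (if x \<le> c \<and> t \<le> x - 0 then indicator ?S x * - delta 1 \<rho> x else 0) \<partial>count_int)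
      = \<rho> t - \<rho> (c + 1)" if "p t \<noteq> 0" "t \<le> c - 0" for t
    by (rule integral_count_space_telescope_on)
      (use that in \<open>auto simp: delta_def intro: order_convexD[OF S pS c]\<close>)
  have above: "(\<integral>x. (if c < x \<and> \<not> t \<le> x - 0 then indicator ?S x * - delta 1 \<rho> x else 0) \<partial>count_int)
      = \<rho> (c + 1) - \<rho> t" if "p t \<noteq> 0" "\<not> t \<le> c - 0" for t
  proof -
    have "(\<integral>x. (if c < x \<and> \<not> t \<le> x - 0 then indicator ?S x * - delta 1 \<rho> x else 0) \<partial>count_int)
      = \<rho> (c + 1) - \<rho> (t - 1 + 1)"
      by (rule integral_count_space_telescope_on)
        (use that in \<open>auto simp: delta_def intro: order_convexD[OF S c pS]\<close>)
    then show ?thesis by simp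
  qed
  note weighted = integral_weight_mult_covK[where a=0 and r="\<rho> (c + 1)",
      OF sigma_finite_measure_count_space _ _ p W_int _ _ below above]
  show "integrable count_int (\<lambda>x. indicator ?S x * - delta 1 \<rho> x * covK count_int p 0 x c)"
    using weighted(1) D_int D_zero by (simp add: pair_measure_countable p\<rho>)
  show "(\<integral>x. indicator ?S x * - delta 1 \<rho> x * covK count_int p 0 x c \<partial>count_int) = p c"
    using weighted(2) D_int D_zero integral_chi_backward_diff_supp[OF p0 p(1) S c]
    by (simp add: pair_measure_countable p\<rho>)
qed

lemma prob_density_on_covK_count_space:
  fixes l :: int and p :: "int \<Rightarrow> real" and a b :: ereal
  defines "\<rho> \<equiv> \<lambda>y. if y \<in> supp p then delta l p y / p y else 0"
  assumes l: "l \<in> {-1, 1}"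
    and p0: "\<forall>x. 0 \<le> p x" and p: "integrable count_int p" "(\<integral>x. p x \<partial>count_int) = 1"
    and S: "supp p = {x. a \<le> ereal (of_int x) \<and> ereal (of_int x) \<le> b}"
    and D: "set_integrable count_int (supp p) (delta l p)" "(LINT x:supp p|count_int. delta l p x) = 0"
    and pos: "AE x in count_int. x \<in> supp p \<longrightarrow> - delta (-l) \<rho> x > 0"
    and W: "integrable count_int (delta (-l) \<rho>)"
    and c: "c \<in> supp p"
  shows "prob_density_on count_int (supp p)
    (\<lambda>x. covK count_int p (if l = 1 then 1 else 0) x c / p c * (- delta (-l) \<rho> x))"
proof (rule prob_density_on_scaled_weight[OF _ _ _ covK_nonneg pos])
  have p0': "\<And>x. 0 \<le> p x"
    using p0 by simp
  have convex: "order_convex (supp p)"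
    unfolding S by (rule order_convex_int_ereal_interval)
  let ?a = "if l = 1 then 1 else 0 :: int"
  have "integrable count_int (\<lambda>x. indicator (supp p) x * - delta (-l) \<rho> x * covK count_int p ?a x c)
    \<and> (\<integral>x. indicator (supp p) x * - delta (-l) \<rho> x * covK count_int p ?a x c \<partial>count_int) = p c"
  proof (cases "l = 1")
    case True
    show ?thesis
      using integral_weight_covK_count_space_forward[OF p0' p convex D[unfolded True]
          W[unfolded True \<rho>_def] c]
      unfolding True \<rho>_def by simp
  next
    case False
    with l have l': "l = -1" by simp
    show ?thesis
      using integral_weight_covK_count_space_backward[OF p0' p convex D[unfolded l']
          W[unfolded l' \<rho>_def, simplified] c]
      unfolding l' \<rho>_def by simp
  qed
  then show "integrable count_int (\<lambda>x. indicator (supp p) x * - delta (-l) \<rho> x * covK count_int p ?a x c)"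
    and "(\<integral>x. indicator (supp p) x * - delta (-l) \<rho> x * covK count_int p ?a x c \<partial>count_int) = p c"
    by auto
  show "0 < p c"
    using c by (simp add: supp_def)
qed (use p p0 in auto)

section \<open>Lebesgue measure on the reals\<close>

lemma has_weak_deriv_on_UNIV_continuous:
  assumes "has_weak_deriv_on f g UNIV"
  shows "continuous_on UNIV f"
proof (rule continuous_at_imp_continuous_on, intro ballI)
  fix x0 :: real
  let ?l = "x0 - 1" and ?u = "x0 + 1"
  have g: "g integrable_on {?l..?u}"
    using assms unfolding has_weak_deriv_on_def by (auto intro: set_borel_integral_eq_integral(1))
  have f_eq: "f y = f ?l + integral {?l..y} g" if "y \<in> {?l..?u}" for y
  proof -
    have "set_integrable lborel {?l..y} g \<and> f y - f ?l = (LINT t:{?l..y}|lborel. g t)"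
      using assms that unfolding has_weak_deriv_on_def by auto
    then show ?thesis using set_borel_integral_eq_integral(2) by fastforce
  qed
  have "continuous_on {?l..?u} (\<lambda>y. f ?l + integral {?l..y} g)"
    by (intro continuous_intros indefinite_integral_continuous_1 g)
  then have "continuous_on {?l..?u} f"
    using f_eq by (metis (no_types, lifting) continuous_on_cong)
  then show "isCont f x0"
    by (rule continuous_on_interior) (auto simp: interior_atLeastAtMost_real)
qed

lemma has_weak_deriv_on_uminus:
  assumes "has_weak_deriv_on f g I"
  shows "has_weak_deriv_on (\<lambda>x. - f x) (\<lambda>x. - g x) I"
  using assms unfolding has_weak_deriv_on_def set_integrable_def set_lebesgue_integral_def
  by (simp add: integrable_minus) (metis minus_diff_eq)

lemma integrable_nonneg_small_below:
  fixes f :: "real \<Rightarrow> real"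
  assumes f: "\<And>x. 0 \<le> f x" "integrable lborel f" and "0 < e"
  shows "\<exists>s\<le>m. f s < e"
proof (rule ccontr)
  assume "\<not> ?thesis"
  then have ge: "e \<le> f s" if "s \<le> m" for s
    using that by (meson not_less)
  define k where "k = (\<integral>x. f x \<partial>lborel) / e + 1"
  have k: "0 \<le> k"
    using f \<open>0 < e\<close> by (simp add: k_def integral_nonneg_AE)
  have fI: "integrable lborel (\<lambda>x. indicator {m - k..m} x * f x)"
    using integrable_mult_indicator[OF _ f(2), of "{m - k..m}"] by simp
  have eI: "integrable lborel (\<lambda>x. indicator {m - k..m} x * e)"
    using k by (simp add: integrable_indicator_iff)
  have "e * k = (\<integral>x. indicator {m - k..m} x * e \<partial>lborel)"
    using k by simp
  also have "\<dots> \<le> (\<integral>x. indicator {m - k..m} x * f x \<partial>lborel)"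
    using eI fI ge by (intro integral_mono) (auto simp: indicator_def)
  also have "\<dots> \<le> (\<integral>x. f x \<partial>lborel)"
    using fI f by (intro integral_mono) (auto simp: indicator_def)
  finally show False
    using \<open>0 < e\<close> by (simp add: k_def field_simps mult_le_0_iff)
qed

lemma integral_restricted_weak_deriv:
  fixes f g :: "real \<Rightarrow> real"
  assumes deriv: "has_weak_deriv_on f g I" "u \<in> I" "v \<in> I" "u \<le> v"
    and between: "\<And>x. u < x \<Longrightarrow> x < v \<Longrightarrow> x \<in> S"
    and inside: "\<And>x. u < x \<Longrightarrow> x < v \<Longrightarrow> P x" and outside: "\<And>x. x < u \<or> v < x \<Longrightarrow> \<not> P x"
  shows "(\<integral>x. (if P x then indicator S x * g x else 0) \<partial>lborel) = f v - f u"
proof -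
  have "f v - f u = (LINT x:{u..v}|lborel. g x)"
    using deriv unfolding has_weak_deriv_on_def by blast
  also have "\<dots> = (\<integral>x. (if P x then indicator S x * g x else 0) \<partial>lborel)"
    unfolding set_lebesgue_integral_def
  proof (rule integral_discrete_difference[where X="{u, v}"])
    show "indicator {u..v} x *\<^sub>R g x = (if P x then indicator S x * g x else 0)"
      if "x \<notin> {u, v}" for x
    proof (cases "u < x \<and> x < v")
      case True
      with inside between show ?thesis by auto
    next
      case False
      with that have "x < u \<or> v < x" by auto
      with outside show ?thesis by auto
    qed
  qed auto
  finally show ?thesis ..
qed

lemma order_convex_real_ereal_interval: "order_convex {x::real. a < ereal x \<and> ereal x < b}"
  unfolding order_convex_def
proof (intro ballI subsetI)
  fix u v x
  assume "u \<in> {x::real. a < ereal x \<and> ereal x < b}" and "v \<in> {x::real. a < ereal x \<and> ereal x < b}"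
    and "x \<in> {u..v}"
  then have "a < ereal u" "ereal u \<le> ereal x" "ereal x \<le> ereal v" "ereal v < b"
    by simp_all
  then show "x \<in> {x::real. a < ereal x \<and> ereal x < b}"
    by (blast intro: order_less_le_trans order_le_less_trans)
qed

lemma exists_seq_at_bot_vanishing:
  fixes f :: "real \<Rightarrow> real"
  assumes f: "\<And>x. 0 \<le> f x" "integrable lborel f"
  obtains s where "\<And>n. s n \<le> c" "(\<lambda>n. f (s n)) \<longlonglongrightarrow> 0"
    "\<And>t. \<forall>\<^sub>F n in sequentially. s n \<le> t"
proof -
  have "\<forall>n. \<exists>s\<le>min c (- real n). f s < inverse (real (Suc n))"
    using integrable_nonneg_small_below[OF f]
    by (metis inverse_positive_iff_positive of_nat_0_less_iff zero_less_Suc)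
  then obtain s where s: "\<And>n. s n \<le> min c (- real n)" "\<And>n. f (s n) < inverse (real (Suc n))"
    by metis
  show ?thesis
  proof (rule that[of s])
    show "s n \<le> c" for n
      using s(1)[of n] by simp
    show "(\<lambda>n. f (s n)) \<longlonglongrightarrow> 0"
    proof (rule Lim_null_comparison[OF _ LIMSEQ_inverse_real_of_nat])
      show "\<forall>\<^sub>F n in sequentially. norm (f (s n)) \<le> inverse (real (Suc n))"
        using s(2) f(1) by (auto intro!: always_eventually less_imp_le)
    qed
    show "\<forall>\<^sub>F n in sequentially. s n \<le> t" for t
    proof (rule eventually_sequentiallyI)
      fix n assume "nat \<lceil>- t\<rceil> \<le> n"
      then have "- t \<le> real n"
        by linarith
      with s(1)[of n] show "s n \<le> t"
        by simp
    qed
  qed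
qed

lemma exists_seq_to_lower_end:
  fixes f :: "real \<Rightarrow> real" and a :: ereal
  assumes f: "\<And>x. 0 \<le> f x" "integrable lborel f" "continuous_on UNIV f"
    and f_a: "\<And>x. ereal x = a \<Longrightarrow> f x = 0" and "a < ereal c"
  obtains s where "\<And>n. a < ereal (s n)" "\<And>n. s n \<le> c" "(\<lambda>n. f (s n)) \<longlonglongrightarrow> 0"
    "\<And>t. a < ereal t \<Longrightarrow> \<forall>\<^sub>F n in sequentially. s n \<le> t"
proof (cases a)
  case (real a0)
  define s where "s n = a0 + (c - a0) * inverse (real (Suc n))" for n
  have "a0 < c"
    using \<open>a < ereal c\<close> real by simp
  have "s \<longlonglongrightarrow> a0 + (c - a0) * 0"
    unfolding s_def by (intro tendsto_intros LIMSEQ_inverse_real_of_nat)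
  then have s_lim: "s \<longlonglongrightarrow> a0"
    by simp
  have "(\<lambda>n. f (s n)) \<longlonglongrightarrow> f a0"
    using f(3) s_lim by (intro isCont_tendsto_compose[of a0 f]) (simp_all add: continuous_on_eq_continuous_at)
  moreover have "f a0 = 0"
    using f_a real by simp
  moreover have "s n \<le> c" for n
  proof -
    have "(c - a0) * inverse (real (Suc n)) \<le> (c - a0) * 1"
      using \<open>a0 < c\<close> by (intro mult_left_mono) (auto simp: field_simps)
    then show ?thesis by (simp add: s_def)
  qed
  moreover have "a < ereal (s n)" for n
    using \<open>a0 < c\<close> real by (simp add: s_def)
  moreover have "\<forall>\<^sub>F n in sequentially. s n \<le> t" if "a < ereal t" for t
    using order_tendstoD(2)[OF s_lim, of t] that real by (auto elim: eventually_mono)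
  ultimately show ?thesis
    using that by auto
next
  case PInf
  with \<open>a < ereal c\<close> show ?thesis by simp
next
  case MInf
  obtain s where s: "\<And>n. s n \<le> c" "(\<lambda>n. f (s n)) \<longlonglongrightarrow> 0" "\<And>t. \<forall>\<^sub>F n in sequentially. s n \<le> t"
    using exists_seq_at_bot_vanishing[OF f(1,2)] by blast
  show ?thesis
    by (rule that[of s]) (use s MInf in auto)
qed

lemma integral_truncation_tendsto:
  fixes D s :: "_ \<Rightarrow> real"
  assumes D: "integrable lborel D" and eventually_below: "\<And>t. D t \<noteq> 0 \<Longrightarrow> \<forall>\<^sub>F n in sequentially. s n \<le> t"
  shows "(\<lambda>n. \<integral>t. (if s n \<le> t \<and> t \<le> c then D t else 0) \<partial>lborel)
      \<longlonglongrightarrow> (\<integral>t. (if t \<le> c then D t else 0) \<partial>lborel)"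
proof (rule integral_dominated_convergence[where w="\<lambda>t. norm (D t)"])
  have [measurable]: "D \<in> borel_measurable lborel"
    using D by auto
  show "(\<lambda>t. if t \<le> c then D t else 0) \<in> borel_measurable lborel"
    by measurable
  show "(\<lambda>t. if s n \<le> t \<and> t \<le> c then D t else 0) \<in> borel_measurable lborel" for n
    by measurable
  show "integrable lborel (\<lambda>t. norm (D t))"
    using D by simp
  show "AE t in lborel. norm (if s n \<le> t \<and> t \<le> c then D t else 0) \<le> norm (D t)" for n
    by (rule AE_I2) simp
  show "AE t in lborel. (\<lambda>n. if s n \<le> t \<and> t \<le> c then D t else 0) \<longlonglongrightarrow> (if t \<le> c then D t else 0)"
  proof (rule AE_I2)
    fix t
    show "(\<lambda>n. if s n \<le> t \<and> t \<le> c then D t else 0) \<longlonglongrightarrow> (if t \<le> c then D t else 0)"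
    proof (cases "D t = 0")
      case False
      then show ?thesis
        by (rule tendsto_eventually[OF eventually_mono[OF eventually_below]]) auto
    next
      case True
      show ?thesis
        unfolding True by simp
    qed
  qed
qed

lemma integral_weak_deriv_supp_atMost:
  fixes p g :: "real \<Rightarrow> real" and a b :: ereal
  assumes p0: "\<And>x. 0 \<le> p x" and p: "integrable lborel p" and deriv: "has_weak_deriv_on p g UNIV"
    and S: "supp p = {x. a < ereal x \<and> ereal x < b}"
    and g: "set_integrable lborel (supp p) g" and c: "c \<in> supp p"
  shows "(\<integral>t. (if t \<le> c then indicator (supp p) t * g t else 0) \<partial>lborel) = p c"
proof -
  have "a < ereal c"
    using c unfolding S by simp
  have "p x = 0" if "ereal x = a" for x
    using that eq_0_if_not_in_supp[of p, OF p0] unfolding S by simp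
  then obtain s where s: "\<And>n. a < ereal (s n)" "\<And>n. s n \<le> c" "(\<lambda>n. p (s n)) \<longlonglongrightarrow> 0"
      "\<And>t. a < ereal t \<Longrightarrow> \<forall>\<^sub>F n in sequentially. s n \<le> t"
    using exists_seq_to_lower_end[OF p0 p has_weak_deriv_on_UNIV_continuous[OF deriv] _ \<open>a < ereal c\<close>]
    by blast
  have s_in: "s n \<in> supp p" for n
  proof -
    have "ereal (s n) \<le> ereal c"
      using s(2)[of n] by simp
    moreover have "ereal c < b"
      using c unfolding S by simp
    ultimately have "ereal (s n) < b"
      by (rule order_le_less_trans)
    with s(1)[of n] show ?thesis
      unfolding S by simp
  qed
  have between: "x \<in> supp p" if "s n < x" "x < c" for n x
    using order_convexD[OF order_convex_real_ereal_interval s_in[of n, unfolded S] c[unfolded S]] that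
    unfolding S by simp
  have approx: "(\<integral>t. (if s n \<le> t \<and> t \<le> c then indicator (supp p) t * g t else 0) \<partial>lborel)
      = p c - p (s n)" for n
    by (rule integral_restricted_weak_deriv[OF deriv _ _ s(2) between]) auto
  have "(\<lambda>n. \<integral>t. (if s n \<le> t \<and> t \<le> c then indicator (supp p) t * g t else 0) \<partial>lborel)
      \<longlonglongrightarrow> (\<integral>t. (if t \<le> c then indicator (supp p) t * g t else 0) \<partial>lborel)"
  proof (rule integral_truncation_tendsto)
    show "integrable lborel (\<lambda>t. indicator (supp p) t * g t)"
      using g by (simp add: set_integrable_def)
    show "\<forall>\<^sub>F n in sequentially. s n \<le> t" if "indicator (supp p) t * g t \<noteq> 0" for t
    proof -
      have "t \<in> supp p"
        using that by (cases "t \<in> supp p") simp_all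
      with s(4) show ?thesis
        unfolding S by simp
    qed
  qed
  moreover have "(\<lambda>n. \<integral>t. (if s n \<le> t \<and> t \<le> c then indicator (supp p) t * g t else 0) \<partial>lborel)
      \<longlonglongrightarrow> p c - 0"
    unfolding approx by (intro tendsto_intros s(3))
  ultimately show ?thesis
    using LIMSEQ_unique by fastforce
qed

lemma integral_weight_covK_lborel:
  fixes p g h :: "real \<Rightarrow> real" and a b :: ereal
  defines "\<rho> \<equiv> \<lambda>x. if x \<in> supp p then g x / p x else 0"
  assumes p0: "\<And>x. 0 \<le> p x" and p: "integrable lborel p" "(\<integral>x. p x \<partial>lborel) = 1"
    and S: "supp p = {x. a < ereal x \<and> ereal x < b}"
    and deriv_p: "has_weak_deriv_on p g UNIV"
    and g: "set_integrable lborel (supp p) g" "(LINT x:supp p|lborel. g x) = 0"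
    and deriv_\<rho>: "has_weak_deriv_on \<rho> h (supp p)"
    and h: "set_integrable lborel (supp p) h"
    and c: "c \<in> supp p"
  shows "integrable lborel (\<lambda>x. indicator (supp p) x * - h x * covK lborel p 0 x c)"
    and "(\<integral>x. indicator (supp p) x * - h x * covK lborel p 0 x c \<partial>lborel) = p c"
proof -
  let ?S = "supp p"
  have p\<rho>: "p t * \<rho> t = indicator ?S t * g t" for t
    unfolding \<rho>_def by (rule mult_supp_ratio[OF p0])
  have D_int: "integrable lborel (\<lambda>t. indicator ?S t * g t)"
    and D_zero: "(\<integral>t. indicator ?S t * g t \<partial>lborel) = 0"
    using g by (simp_all add: set_integrable_def set_lebesgue_integral_def)
  have W_int: "integrable lborel (\<lambda>x. indicator ?S x * - h x)"
    using h by (simp add: set_integrable_def)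
  have pS: "p t \<noteq> 0 \<Longrightarrow> t \<in> ?S" for t
    using eq_0_if_not_in_supp[of p, OF p0] by blast
  have convex: "order_convex ?S"
    unfolding S by (rule order_convex_real_ereal_interval)
  note deriv_neg = has_weak_deriv_on_uminus[OF deriv_\<rho>]
  have below: "(\<integral>x. (if x \<le> c \<and> t \<le> x - 0 then indicator ?S x * - h x else 0) \<partial>lborel)
      = \<rho> t - \<rho> c" if "p t \<noteq> 0" "t \<le> c - 0" for t
  proof -
    have "(\<integral>x. (if x \<le> c \<and> t \<le> x - 0 then indicator ?S x * - h x else 0) \<partial>lborel) = - \<rho> c - - \<rho> t"
      by (rule integral_restricted_weak_deriv[OF deriv_neg pS[OF that(1)] c])
        (use that order_convexD[OF convex pS[OF that(1)] c] in auto)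
    then show ?thesis
      by simp
  qed
  have above: "(\<integral>x. (if c < x \<and> \<not> t \<le> x - 0 then indicator ?S x * - h x else 0) \<partial>lborel)
      = \<rho> c - \<rho> t" if "p t \<noteq> 0" "\<not> t \<le> c - 0" for t
  proof -
    have "(\<integral>x. (if c < x \<and> \<not> t \<le> x - 0 then indicator ?S x * - h x else 0) \<partial>lborel) = - \<rho> t - - \<rho> c"
      by (rule integral_restricted_weak_deriv[OF deriv_neg c pS[OF that(1)]])
        (use that order_convexD[OF convex c pS[OF that(1)]] in auto)
    then show ?thesis
      by simp
  qed
  have "(\<integral>t. chi 0 t c * (p t * \<rho> t) \<partial>lborel)
      = (\<integral>t. (if t \<le> c then indicator ?S t * g t else 0) \<partial>lborel)"
    by (rule Bochner_Integration.integral_cong) (simp_all add: chi_def p\<rho>)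
  also have "\<dots> = p c"
    by (rule integral_weak_deriv_supp_atMost[OF p0 p(1) deriv_p S g(1) c])
  finally have boundary: "(\<integral>t. chi 0 t c * (p t * \<rho> t) \<partial>lborel) = p c" .
  have pair: "Measurable.pred (lborel \<Otimes>\<^sub>M lborel) (\<lambda>z::real \<times> real. snd z \<le> fst z - 0)"
    by measurable
  note weighted = integral_weight_mult_covK[where a=0 and r="\<rho> c",
      OF sigma_finite_lborel _ pair p W_int _ _ below above]
  show "integrable lborel (\<lambda>x. indicator ?S x * - h x * covK lborel p 0 x c)"
    using weighted(1) D_int D_zero by (simp add: p\<rho>)
  show "(\<integral>x. indicator ?S x * - h x * covK lborel p 0 x c \<partial>lborel) = p c"
    using weighted(2) D_int D_zero boundary by (simp add: p\<rho>)
qed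

lemma prob_density_on_covK_lborel:
  fixes p g h :: "real \<Rightarrow> real" and a b :: ereal
  defines "\<rho> \<equiv> \<lambda>x. if x \<in> supp p then g x / p x else 0"
  assumes p0: "\<forall>x. 0 \<le> p x" and p: "integrable lborel p" "(\<integral>x. p x \<partial>lborel) = 1"
    and S: "interior (supp p) = {x. a < ereal x \<and> ereal x < b}"
    and deriv_p: "has_weak_deriv_on p g UNIV"
    and g: "set_integrable lborel (supp p) g" "(LINT x:supp p|lborel. g x) = 0"
    and deriv_\<rho>: "has_weak_deriv_on \<rho> h (interior (supp p))"
    and pos: "AE x in lborel. x \<in> supp p \<longrightarrow> - h x > 0"
    and h: "set_integrable lborel (supp p) h"
    and c: "c \<in> supp p"
  shows "prob_density_on lborel (supp p) (\<lambda>x. covK lborel p 0 x c / p c * (- h x))"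
proof -
  have p0': "\<And>x. 0 \<le> p x"
    using p0 by simp
  have "open {x. 0 < p x}"
    using has_weak_deriv_on_UNIV_continuous[OF deriv_p]
    by (intro open_Collect_less continuous_intros) auto
  then have open_supp: "interior (supp p) = supp p"
    by (simp add: supp_def interior_open)
  note weighted = integral_weight_covK_lborel[OF p0' p S[unfolded open_supp] deriv_p g
      deriv_\<rho>[unfolded open_supp \<rho>_def] h c]
  show ?thesis
  proof (rule prob_density_on_scaled_weight[OF weighted _ covK_nonneg pos])
    show "0 < p c"
      using c by (simp add: supp_def)
  qed (use p p0' in auto)
qed

theorem proposition2p14:
  shows
  "(\<forall>(p::real \<Rightarrow> real) (g::real \<Rightarrow> real) (h::real \<Rightarrow> real) (x'::real).
      ((\<forall>x. 0 \<le> p x) \<and> integrable lborel p \<and> (LINT x|lborel. p x) = 1 \<and>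
       (\<exists>a b::ereal. a < b \<and>
          interior (supp p) = {x. a < ereal x \<and> ereal x < b} \<and>
          closure (supp p) = {x. a \<le> ereal x \<and> ereal x \<le> b}) \<and>
       has_weak_deriv_on p g UNIV \<and>
       set_integrable lborel (supp p) g \<and> (LINT x:supp p|lborel. g x) = 0 \<and>
       has_weak_deriv_on (\<lambda>x. if x \<in> supp p then g x / p x else 0) h (interior (supp p)) \<and>
       (AE x in lborel. x \<in> supp p \<longrightarrow> - h x > 0) \<and>
       set_integrable lborel (supp p) h \<and>
       x' \<in> supp p)
      \<longrightarrow> prob_density_on lborel (supp p)
            (\<lambda>x. covK lborel p 0 x x' / p x' * (- h x)))
   \<and>
   (\<forall>(l::int) (p::int \<Rightarrow> real) (x'::int).
      (l \<in> {-1, 1} \<and>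
       (\<forall>x. 0 \<le> p x) \<and> integrable (count_space UNIV) p \<and>
       (LINT x|count_space UNIV. p x) = 1 \<and>
       (\<exists>a b::ereal. a < b \<and>
          a \<in> {-\<infinity>, \<infinity>} \<union> range (\<lambda>k::int. ereal (of_int k)) \<and>
          b \<in> {-\<infinity>, \<infinity>} \<union> range (\<lambda>k::int. ereal (of_int k)) \<and>
          supp p = {x. a \<le> ereal (of_int x) \<and> ereal (of_int x) \<le> b}) \<and>
       set_integrable (count_space UNIV) (supp p) (delta l p) \<and>
       (LINT x:supp p|count_space UNIV. delta l p x) = 0 \<and>
       (AE x in count_space UNIV. x \<in> supp p \<longrightarrow>
          - delta (-l) (\<lambda>y. if y \<in> supp p then delta l p y / p y else 0) x > 0) \<and>
       integrable (count_space UNIV)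
          (delta (-l) (\<lambda>y. if y \<in> supp p then delta l p y / p y else 0)) \<and>
       x' \<in> supp p)
      \<longrightarrow> prob_density_on (count_space UNIV) (supp p)
            (\<lambda>x. covK (count_space UNIV) p (if l = 1 then 1 else 0) x x' / p x'
                 * (- delta (-l) (\<lambda>y. if y \<in> supp p then delta l p y / p y else 0) x)))"
  apply (intro conjI allI impI; elim conjE exE)
  subgoal by (rule prob_density_on_covK_lborel; assumption)
  subgoal by (rule prob_density_on_covK_count_space; assumption)
  done

end
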